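(* Let $X$ be a compact subset of a real normed vector space $(V,\|\cdot\|)$. Fix $\varepsilon>0$ and a continuous $f:X\to\mathbb R$ such that $af(x)\le\varepsilon+a\|x\|$ for all $x\in X$ and $a\in[0,1]$. Define, for $y\in X$, $$\hat f(y)=\inf_{a\in[0,1],\,b\in(0,1],\,x\in X}\frac1b\big(\varepsilon+\|ax-by\|-af(x)\big).$$ Then the following hold. 1. For every $y\in X$, $-\|y\|\le\hat f(y)\le -f(y)+\varepsilon$. 2. $\hat f$ is $1$-Lipschitz on $X$. 3. For all $x,y\in X$ and $a,b\in[0,1]$, $a\hat f(x)-b\hat f(y)\le a\varepsilon+\|by-ax\|$. *)

theory Defs
  imports "HOL-Analysis.Analysis"
begin

definition fhat :: "real \<Rightarrow> ('v::real_normed_vector \<Rightarrow> real) \<Rightarrow> 'v set \<Rightarrow> 'v \<Rightarrow> real" where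
  "fhat \<epsilon> f X y = (INF p \<in> {0..1} \<times> {0<..1} \<times> X.
      (case p of (a, b, x) \<Rightarrow> (1 / b) * (\<epsilon> + norm (a *\<^sub>R x - b *\<^sub>R y) - a * f x)))"

end

theory Submission
  imports Defs
begin

(* The regularisation fhat e f X y is the infimum over admissible triples (a, b, x),
   with a in [0,1], b in (0,1], x in X, of the candidate value
     fhat_cand e f y a b x = (e + |ax - by| - a f x) / b.
   Everything follows from two elementary facts about an infimum: fhat is below every
   candidate, and above every common lower bound of the candidates.
   (1) The growth hypothesis a f x <= e + a|x| makes every candidate at least -|y|;
       the triple (1, 1, y) gives the upper bound -f y + e.
   (2) Moving y to y' changes each candidate by at most dist y y' (triangle inequality),
       so fhat is 1-Lipschitz.
   (3) For the mixed inequality, the triple (c/(a+c), a/(a+c), z) yields the homogeneous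
       bound a fhat x <= (a+c) e + |cz - ax| - c f z for all a > 0, c >= 0; choosing
       c = (b/b') a' and using the triangle inequality bounds (a fhat x - a e - |by - ax|)/b
       by every candidate for y, hence by fhat y.  The cases a = 0 or b = 0 reduce to (1). *)

definition fhat_cand :: "real \<Rightarrow> ('v::real_normed_vector \<Rightarrow> real) \<Rightarrow> 'v \<Rightarrow> real \<Rightarrow> real \<Rightarrow> 'v \<Rightarrow> real" where
  "fhat_cand e f y a b x = (1 / b) * (e + norm (a *\<^sub>R x - b *\<^sub>R y) - a * f x)"

definition growth_bound :: "real \<Rightarrow> ('v::real_normed_vector \<Rightarrow> real) \<Rightarrow> 'v set \<Rightarrow> bool" where
  "growth_bound e f X \<longleftrightarrow> (\<forall>x\<in>X. \<forall>a\<in>{0..1}. a * f x \<le> e + a * norm x)"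

abbreviation admissible :: "'v set \<Rightarrow> (real \<times> real \<times> 'v) set" where
  "admissible X \<equiv> {0..1} \<times> {0<..1} \<times> X"

lemma fhat_eq_INF_cand:
  "fhat e f X y = (INF (a, b, x) \<in> admissible X. fhat_cand e f y a b x)"
  by (simp add: fhat_def fhat_cand_def)

lemma fhat_cand_ge_neg_norm:
  fixes f :: "'v::real_normed_vector \<Rightarrow> real"
  assumes growth: "growth_bound e f X"
    and a: "a \<in> {0..1}" and b: "b \<in> {0<..1}" and x: "x \<in> X"
  shows "- norm y \<le> fhat_cand e f y a b x"
proof -
  have "a * norm x - b * norm y \<le> norm (a *\<^sub>R x - b *\<^sub>R y)"
    using norm_triangle_ineq2[of "a *\<^sub>R x" "b *\<^sub>R y"] a b by simp
  moreover have "a * f x \<le> e + a * norm x" using growth x a by (auto simp: growth_bound_def)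
  ultimately have "- b * norm y \<le> e + norm (a *\<^sub>R x - b *\<^sub>R y) - a * f x" by linarith
  then show ?thesis using b by (simp add: fhat_cand_def field_simps)
qed

lemma fhat_le_cand:
  fixes f :: "'v::real_normed_vector \<Rightarrow> real"
  assumes growth: "growth_bound e f X"
    and a: "a \<in> {0..1}" and b: "b \<in> {0<..1}" and x: "x \<in> X"
  shows "fhat e f X y \<le> fhat_cand e f y a b x"
proof -
  have "bdd_below ((\<lambda>(a, b, x). fhat_cand e f y a b x) ` admissible X)"
    by (rule bdd_belowI[of _ "- norm y"]) (auto intro: fhat_cand_ge_neg_norm[OF growth])
  from cINF_lower[OF this, of "(a, b, x)"] show ?thesis
    unfolding fhat_eq_INF_cand using a b x by simp
qed

lemma fhat_ge_lower_bound:
  fixes f :: "'v::real_normed_vector \<Rightarrow> real"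
  assumes "X \<noteq> {}"
    and "\<And>a b x. a \<in> {0..1} \<Longrightarrow> b \<in> {0<..1} \<Longrightarrow> x \<in> X \<Longrightarrow> c \<le> fhat_cand e f y a b x"
  shows "c \<le> fhat e f X y"
  unfolding fhat_eq_INF_cand using assms by (auto intro!: cINF_greatest)

lemma fhat_ge_neg_norm:
  fixes f :: "'v::real_normed_vector \<Rightarrow> real"
  assumes growth: "growth_bound e f X"
    and y: "y \<in> X"
  shows "- norm y \<le> fhat e f X y"
  using y by (intro fhat_ge_lower_bound) (auto intro: fhat_cand_ge_neg_norm[OF growth])

(* Part 1, upper bound: the triple (1, 1, y). *)
lemma fhat_le_neg_f:
  fixes f :: "'v::real_normed_vector \<Rightarrow> real"
  assumes growth: "growth_bound e f X"
    and y: "y \<in> X"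
  shows "fhat e f X y \<le> - f y + e"
  using fhat_le_cand[OF growth _ _ y, of 1 1 y] by (simp add: fhat_cand_def)

(* The triple (0, 1, y) gives the bound used when the second weight vanishes. *)
lemma fhat_le_eps_norm:
  fixes f :: "'v::real_normed_vector \<Rightarrow> real"
  assumes growth: "growth_bound e f X"
    and y: "y \<in> X"
  shows "fhat e f X y \<le> e + norm y"
  using fhat_le_cand[OF growth _ _ y, of 0 1 y] by (simp add: fhat_cand_def)

lemma fhat_cand_shift:
  assumes b: "b \<in> {0<..1}"
  shows "fhat_cand e f y a b x \<le> fhat_cand e f y' a b x + dist y y'"
proof -
  have "norm (a *\<^sub>R x - b *\<^sub>R y) \<le> norm (a *\<^sub>R x - b *\<^sub>R y') + norm (b *\<^sub>R y' - b *\<^sub>R y)"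
    using norm_triangle_ineq[of "a *\<^sub>R x - b *\<^sub>R y'" "b *\<^sub>R y' - b *\<^sub>R y"] by simp
  also have "norm (b *\<^sub>R y' - b *\<^sub>R y) = b * dist y y'"
    using b by (simp add: dist_norm norm_minus_commute flip: scaleR_diff_right)
  finally have "(1 / b) * (e + norm (a *\<^sub>R x - b *\<^sub>R y) - a * f x)
      \<le> (1 / b) * ((e + norm (a *\<^sub>R x - b *\<^sub>R y') - a * f x) + b * dist y y')"
    using b by (intro mult_left_mono) auto
  then show ?thesis
    using b by (simp add: fhat_cand_def distrib_left)
qed

lemma fhat_lipschitz:
  fixes f :: "'v::real_normed_vector \<Rightarrow> real"
  assumes growth: "growth_bound e f X"
  shows "1-lipschitz_on X (fhat e f X)"
proof (rule lipschitz_onI)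
  have shift: "fhat e f X y - dist y y' \<le> fhat e f X y'" if "y \<in> X" "y' \<in> X" for y y'
  proof (rule fhat_ge_lower_bound)
    show "X \<noteq> {}" using that by auto
    fix a b :: real and x assume "a \<in> {0..1}" "b \<in> {0<..1}" "x \<in> X"
    then have "fhat e f X y \<le> fhat_cand e f y a b x"
      by (rule fhat_le_cand[OF growth])
    moreover have "fhat_cand e f y a b x \<le> fhat_cand e f y' a b x + dist y y'"
      using \<open>b \<in> {0<..1}\<close> by (rule fhat_cand_shift)
    ultimately show "fhat e f X y - dist y y' \<le> fhat_cand e f y' a b x"
      by linarith
  qed
  fix y y' assume "y \<in> X" "y' \<in> X"
  then show "dist (fhat e f X y) (fhat e f X y') \<le> 1 * dist y y'"
    using shift[of y y'] shift[of y' y] by (simp add: dist_real_def dist_commute abs_le_iff)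
qed simp

(* Homogeneous form of the definition: the triple (c/(a+c), a/(a+c), z) scaled by a + c. *)
lemma fhat_scaled_bound:
  fixes f :: "'v::real_normed_vector \<Rightarrow> real"
  assumes growth: "growth_bound e f X"
    and a: "a > 0" and c: "c \<ge> 0" and z: "z \<in> X"
  shows "a * fhat e f X x \<le> (a + c) * e + norm (c *\<^sub>R z - a *\<^sub>R x) - c * f z"
proof -
  define s where "s = a + c"
  have s: "s > 0" using a c by (simp add: s_def)
  have "c / s \<in> {0..1}" "a / s \<in> {0<..1}" using a c s by (auto simp: s_def)
  from fhat_le_cand[OF growth this z]
  have "fhat e f X x \<le> (s / a) * (e + norm ((1 / s) *\<^sub>R (c *\<^sub>R z - a *\<^sub>R x)) - (c / s) * f z)"
    by (simp add: fhat_cand_def scaleR_diff_right)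
  also have "norm ((1 / s) *\<^sub>R (c *\<^sub>R z - a *\<^sub>R x)) = norm (c *\<^sub>R z - a *\<^sub>R x) / s"
    using s by simp
  also have "(s / a) * (e + norm (c *\<^sub>R z - a *\<^sub>R x) / s - (c / s) * f z)
      = (s * e + norm (c *\<^sub>R z - a *\<^sub>R x) - c * f z) / a"
    using s a by (simp add: field_simps)
  finally show ?thesis using a by (simp add: s_def field_simps)
qed

(* Part 3 for positive weights: compare with every candidate (a', b', z) for y,
   rescaled by t = b / b'. *)
lemma fhat_mixed_bound_pos:
  fixes f :: "'v::real_normed_vector \<Rightarrow> real"
  assumes growth: "growth_bound e f X"
    and e: "e \<ge> 0" and x: "x \<in> X" and y: "y \<in> X" and a: "a > 0" and b: "b > 0"
  shows "a * fhat e f X x - b * fhat e f X y \<le> a * e + norm (b *\<^sub>R y - a *\<^sub>R x)"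
proof -
  have "(a * fhat e f X x - a * e - norm (b *\<^sub>R y - a *\<^sub>R x)) / b \<le> fhat e f X y"
  proof (rule fhat_ge_lower_bound)
    show "X \<noteq> {}" using x by auto
    fix a' b' :: real and z assume a': "a' \<in> {0..1}" and b': "b' \<in> {0<..1}" and z: "z \<in> X"
    define t where "t = b / b'"
    have t: "t > 0" using b b' by (simp add: t_def)
    have scaled: "a * fhat e f X x \<le> (a + t * a') * e + norm ((t * a') *\<^sub>R z - a *\<^sub>R x) - t * a' * f z"
      using fhat_scaled_bound[OF growth a _ z] t a' by simp
    have eps: "(a + t * a') * e \<le> a * e + t * e"
      using mult_right_mono[of "t * a'" t e] a' t e by (simp add: distrib_right)
    have "norm ((t * a') *\<^sub>R z - a *\<^sub>R x)
        \<le> norm ((t * a') *\<^sub>R z - b *\<^sub>R y) + norm (b *\<^sub>R y - a *\<^sub>R x)"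
      using norm_triangle_ineq[of "(t * a') *\<^sub>R z - b *\<^sub>R y" "b *\<^sub>R y - a *\<^sub>R x"] by simp
    also have "(t * a') *\<^sub>R z - b *\<^sub>R y = t *\<^sub>R (a' *\<^sub>R z - b' *\<^sub>R y)"
      using b' by (simp add: t_def scaleR_diff_right)
    finally have tri: "norm ((t * a') *\<^sub>R z - a *\<^sub>R x)
        \<le> t * norm (a' *\<^sub>R z - b' *\<^sub>R y) + norm (b *\<^sub>R y - a *\<^sub>R x)"
      using t by simp
    have "a * fhat e f X x - a * e - norm (b *\<^sub>R y - a *\<^sub>R x)
        \<le> t * (e + norm (a' *\<^sub>R z - b' *\<^sub>R y) - a' * f z)"
      using scaled eps tri by (simp add: algebra_simps)
    also have "\<dots> = b * fhat_cand e f y a' b' z"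
      by (simp add: t_def fhat_cand_def)
    finally show "(a * fhat e f X x - a * e - norm (b *\<^sub>R y - a *\<^sub>R x)) / b \<le> fhat_cand e f y a' b' z"
      using b by (simp add: divide_le_eq mult.commute)
  qed
  then show ?thesis using b by (simp add: divide_le_eq mult.commute)
qed

(* Part 3; a vanishing weight reduces to the bounds of part 1. *)
lemma fhat_mixed_bound:
  fixes f :: "'v::real_normed_vector \<Rightarrow> real"
  assumes growth: "growth_bound e f X"
    and e: "e \<ge> 0" and x: "x \<in> X" and y: "y \<in> X" and a: "a \<ge> 0" and b: "b \<ge> 0"
  shows "a * fhat e f X x - b * fhat e f X y \<le> a * e + norm (b *\<^sub>R y - a *\<^sub>R x)"
proof (cases "a = 0 \<or> b = 0")
  case True
  then show ?thesis
  proof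
    assume "a = 0"
    then show ?thesis
      using mult_left_mono[OF fhat_ge_neg_norm[OF growth y] b] b by simp
  next
    assume "b = 0"
    then show ?thesis
      using mult_left_mono[OF fhat_le_eps_norm[OF growth x] a] a by (simp add: algebra_simps)
  qed
next
  case False
  then show ?thesis using fhat_mixed_bound_pos[OF growth e x y] a b by simp
qed

theorem lemma1:
  fixes X :: "'v::real_normed_vector set" and f :: "'v \<Rightarrow> real" and \<epsilon> :: real
  assumes "compact X" and "\<epsilon> > 0" and "continuous_on X f"
    and "\<And>x a. x \<in> X \<Longrightarrow> a \<in> {0..1} \<Longrightarrow> a * f x \<le> \<epsilon> + a * norm x"
  shows "(\<forall>y\<in>X. - norm y \<le> fhat \<epsilon> f X y \<and> fhat \<epsilon> f X y \<le> - f y + \<epsilon>)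
    \<and> 1-lipschitz_on X (fhat \<epsilon> f X)
    \<and> (\<forall>x\<in>X. \<forall>y\<in>X. \<forall>a\<in>{0..1}. \<forall>b\<in>{0..1}.
         a * fhat \<epsilon> f X x - b * fhat \<epsilon> f X y \<le> a * \<epsilon> + norm (b *\<^sub>R y - a *\<^sub>R x))"
proof -
  have growth: "growth_bound \<epsilon> f X"
    using assms(4) by (simp add: growth_bound_def)
  show ?thesis
    using fhat_ge_neg_norm[OF growth] fhat_le_neg_f[OF growth]
      fhat_lipschitz[OF growth] fhat_mixed_bound[OF growth] \<open>\<epsilon> > 0\<close>
    by auto
qed

end
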